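(* Consider the discrete-time fractional-order system $\Delta^{\alpha}x[k+1]=Ax[k]+Bu[k]$, $y[k]=Cx[k]$, with state $x[k]\in\mathbb{R}^n$, unknown input $u[k]\in\mathbb{R}^p$ ($p<n$), and matrices $A\in\mathbb{R}^{n\times n}$, $B\in\mathbb{R}^{n\times p}$, $C$ with $n$ columns, where $\Delta^{\alpha_i}x_i[k]=\sum_{j=0}^{k}\psi(\alpha_i,j)x_i[k-j]$. Let $K\ge 1$ and define $\Theta$ and $\Xi$ as in the context. Then the system is perfectly observable after $K$ measurements if and only if $\operatorname{rank}([\Theta\ \ \Xi])=n+(K-1)p$.
   Context: $\psi(\alpha_i,j)=\frac{\Gamma(j-\alpha_i)}{\Gamma(-\alpha_i)\Gamma(j+1)}$, $D(\alpha,j)=\operatorname{diag}(\psi(\alpha_1,j),\dots,\psi(\alpha_n,j))$, $A_0=A-D(\alpha,1)$, $A_j=-D(\alpha,j+1)$ for $j\ge1$, $G_0=I_n$, $G_k=\sum_{j=0}^{k-1}A_jG_{k-1-j}$ for $k\ge1$; the state satisfies $x[k]=G_kx[0]+\sum_{j=0}^{k-1}G_{k-1-j}Bu[j]$. Define $\Theta=[(CG_0)^T,(CG_1)^T,\dots,(CG_{K-1})^T]^T$ and $\Xi$ the $K\times K$ block lower-triangular matrix whose $(r,s)$ block ($r,s=1,\dots,K$) is $CG_{r-s-1}B$ if $r>s$ and $0$ otherwise (so the first block row and last block column are zero), so that $Y=\Theta x[0]+\Xi U$ with $Y=[y[0]^T,\dots,y[K-1]^T]^T$, $U=[u[0]^T,\dots,u[K-1]^T]^T$.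 The system is perfectly observable (after $K$ measurements) if, given $(\alpha,A,B,C)$ and the observations $y[0],\dots,y[K-1]$, it is possible to (uniquely) recover the initial state $x[0]$ and the unknown inputs $u[0],\dots,u[K-2]$. *)

theory Defs
  imports Complex_Main "Jordan_Normal_Form.DL_Rank"
begin

text \<open>Coefficient psi(a,j) = Gamma(j-a)/(Gamma(-a) Gamma(j+1)), written via the
  Gamma-ratio identity Gamma(j-a)/Gamma(-a) = pochhammer (-a) j (well defined for all a).\<close>
definition psi :: "real \<Rightarrow> nat \<Rightarrow> real" where
  "psi a j = pochhammer (-a) j / fact j"

definition Dmat :: "real vec \<Rightarrow> nat \<Rightarrow> real mat" where
  "Dmat \<alpha> j = mat (dim_vec \<alpha>) (dim_vec \<alpha>) (\<lambda>(i,k). if i = k then psi (\<alpha> $ i) j else 0)"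

definition Acoef :: "real vec \<Rightarrow> real mat \<Rightarrow> nat \<Rightarrow> real mat" where
  "Acoef \<alpha> A j = (if j = 0 then A - Dmat \<alpha> 1 else - Dmat \<alpha> (j + 1))"

fun Glist :: "real vec \<Rightarrow> real mat \<Rightarrow> nat \<Rightarrow> real mat list" where
  "Glist \<alpha> A 0 = [1\<^sub>m (dim_row A)]"
| "Glist \<alpha> A (Suc k) =
     (let gs = Glist \<alpha> A k
      in gs @ [foldr (\<lambda>j acc. Acoef \<alpha> A j * gs ! (k - j) + acc) [0..<Suc k]
                     (0\<^sub>m (dim_row A) (dim_row A))])"

definition Gmat :: "real vec \<Rightarrow> real mat \<Rightarrow> nat \<Rightarrow> real mat" where
  "Gmat \<alpha> A k = Glist \<alpha> A k ! k"

definition Theta :: "real vec \<Rightarrow> real mat \<Rightarrow> real mat \<Rightarrow> nat \<Rightarrow> real mat" where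
  "Theta \<alpha> A C K = mat (K * dim_row C) (dim_col C)
     (\<lambda>(i,j). (C * Gmat \<alpha> A (i div dim_row C)) $$ (i mod dim_row C, j))"

text \<open>Xi: K x K block lower triangular, block (r,s) (0-based) = C G_{r-s-1} B if r > s, else 0.\<close>
definition Xi :: "real vec \<Rightarrow> real mat \<Rightarrow> real mat \<Rightarrow> real mat \<Rightarrow> nat \<Rightarrow> real mat" where
  "Xi \<alpha> A B C K = mat (K * dim_row C) (K * dim_col B)
     (\<lambda>(i,j). let r = i div dim_row C; s = j div dim_col B in
        if s < r then (C * Gmat \<alpha> A (r - s - 1) * B) $$ (i mod dim_row C, j mod dim_col B)
        else 0)"

definition ThetaXi :: "real vec \<Rightarrow> real mat \<Rightarrow> real mat \<Rightarrow> real mat \<Rightarrow> nat \<Rightarrow> real mat" where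
  "ThetaXi \<alpha> A B C K = (let T = Theta \<alpha> A C K; X = Xi \<alpha> A B C K in
     mat (dim_row T) (dim_col T + dim_col X)
       (\<lambda>(i,j). if j < dim_col T then T $$ (i,j) else X $$ (i, j - dim_col T)))"

definition frac_diff :: "real vec \<Rightarrow> (nat \<Rightarrow> real vec) \<Rightarrow> nat \<Rightarrow> real vec" where
  "frac_diff \<alpha> x k = vec (dim_vec \<alpha>) (\<lambda>i. \<Sum>j\<le>k. psi (\<alpha> $ i) j * (x (k - j) $ i))"

definition is_solution :: "real vec \<Rightarrow> real mat \<Rightarrow> real mat \<Rightarrow> (nat \<Rightarrow> real vec) \<Rightarrow> (nat \<Rightarrow> real vec) \<Rightarrow> bool" where
  "is_solution \<alpha> A B x u \<longleftrightarrow>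
     (\<forall>k. x k \<in> carrier_vec (dim_row A) \<and> u k \<in> carrier_vec (dim_col B)) \<and>
     (\<forall>k. frac_diff \<alpha> x (Suc k) = A *\<^sub>v x k + B *\<^sub>v u k)"

definition perfectly_observable :: "real vec \<Rightarrow> real mat \<Rightarrow> real mat \<Rightarrow> real mat \<Rightarrow> nat \<Rightarrow> bool" where
  "perfectly_observable \<alpha> A B C K \<longleftrightarrow>
     (\<forall>x u x' u'. is_solution \<alpha> A B x u \<and> is_solution \<alpha> A B x' u' \<and>
        (\<forall>k<K. C *\<^sub>v x k = C *\<^sub>v x' k) \<longrightarrow>
        x 0 = x' 0 \<and> (\<forall>j. j + 1 < K \<longrightarrow> u j = u' j))"

end

theory Submission
  imports Defs
begin

text \<open>Every solution has the closed form
  \<open>x[k] = G\<^sub>k x[0] + (\<Sum>s<k. G\<^sub>k\<^sub>-\<^sub>1\<^sub>-\<^sub>s B u[s])\<close>, so the stacked outputs are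
  \<open>Y = [\<Theta> \<Xi>] [x[0]; u[0]; \<dots>; u[K-1]]\<close>. The last block column of \<open>\<Xi>\<close> vanishes, hence
  \<open>Y = M w\<close> with \<open>M\<close> the first \<open>n + (K-1)p\<close> columns of \<open>[\<Theta> \<Xi>]\<close> and
  \<open>w = [x[0]; u[0]; \<dots>; u[K-2]]\<close>, and \<open>rank [\<Theta> \<Xi>] = rank M\<close>. Since every \<open>w\<close> is realised
  by a solution, perfect observability says exactly that \<open>w \<mapsto> M w\<close> is injective, i.e. that \<open>M\<close>
  has full column rank \<open>n + (K-1)p\<close>.\<close>

lemma index_mult_mat_sum:
  assumes "A \<in> carrier_mat nr n" "B \<in> carrier_mat n nc" "i < nr" "j < nc"
  shows "(A * B) $$ (i,j) = (\<Sum>h<n. A $$ (i,h) * B $$ (h,j))"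
  using assms by (simp add: scalar_prod_def atLeast0LessThan)

lemma index_mult_mat_vec_sum:
  assumes "A \<in> carrier_mat nr n" "v \<in> carrier_vec n" "i < nr"
  shows "(A *\<^sub>v v) $ i = (\<Sum>h<n. A $$ (i,h) * v $ h)"
  using assms by (simp add: scalar_prod_def atLeast0LessThan)

lemma mult_mat_vec_vec_sum:
  assumes "C \<in> carrier_mat m n" "\<And>s. s \<in> S \<Longrightarrow> f s \<in> carrier_vec n" "q < m"
  shows "(C *\<^sub>v vec n (\<lambda>i. \<Sum>s\<in>S. f s $ i)) $ q = (\<Sum>s\<in>S. (C *\<^sub>v f s) $ q)"
proof -
  have "(C *\<^sub>v vec n (\<lambda>i. \<Sum>s\<in>S. f s $ i)) $ q = (\<Sum>h<n. \<Sum>s\<in>S. C $$ (q,h) * f s $ h)"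
    by (subst index_mult_mat_vec_sum[OF assms(1) _ assms(3)]) (auto simp: sum_distrib_left)
  also have "\<dots> = (\<Sum>s\<in>S. \<Sum>h<n. C $$ (q,h) * f s $ h)"
    by (rule sum.swap)
  also have "\<dots> = (\<Sum>s\<in>S. (C *\<^sub>v f s) $ q)"
    by (intro sum.cong refl) (simp del: index_mult_mat_vec add: index_mult_mat_vec_sum[OF assms])
  finally show ?thesis .
qed

lemma mult_mat_vec_unit_vec:
  fixes A :: "'a :: semiring_1 mat"
  assumes "A \<in> carrier_mat nr nc" "i < nc"
  shows "A *\<^sub>v unit_vec nc i = col A i"
  using assms by (intro eq_vecI) auto

lemma foldr_add_mat:
  assumes "\<And>j. j \<in> set js \<Longrightarrow> F j \<in> carrier_mat nr nc"
  shows "foldr (\<lambda>j acc. F j + acc) js (0\<^sub>m nr nc) = mat nr nc (\<lambda>(i,l). \<Sum>j\<leftarrow>js. F j $$ (i,l))"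
  using assms by (induction js) (auto intro!: eq_matI)

lemma sum_delta_mult:
  fixes y :: "nat \<Rightarrow> 'a :: semiring_0"
  assumes "i < n"
  shows "(\<Sum>h<n. (if i = h then c else 0) * y h) = c * y i"
proof -
  have "(\<Sum>h<n. (if i = h then c else 0) * y h) = (\<Sum>h<n. if h = i then c * y h else 0)"
    by (rule sum.cong) auto
  then show ?thesis
    using assms by (simp add: sum.delta')
qed

lemma sum_triangle_swap:
  fixes f :: "nat \<Rightarrow> nat \<Rightarrow> 'a :: comm_monoid_add"
  shows "(\<Sum>j\<le>k. \<Sum>s<k - j. f j s) = (\<Sum>s<k. \<Sum>j\<le>k - 1 - s. f j s)"
proof -
  have "(\<Sum>j\<le>k. \<Sum>s<k - j. f j s) = (\<Sum>j\<le>k. \<Sum>s\<in>{s\<in>{..<k}. j + s < k}. f j s)"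
    by (intro sum.cong) auto
  also have "\<dots> = (\<Sum>s<k. \<Sum>j\<in>{j\<in>{..k}. j + s < k}. f j s)"
    by (rule sum.swap_restrict) auto
  also have "\<dots> = (\<Sum>s<k. \<Sum>j\<le>k - 1 - s. f j s)"
    by (intro sum.cong) auto
  finally show ?thesis .
qed

lemma sum_lessThan_add_split:
  fixes f :: "nat \<Rightarrow> 'a :: comm_monoid_add"
  shows "(\<Sum>j<a + b. f j) = (\<Sum>j<a. f j) + (\<Sum>j<b. f (a + j))"
  by (induction b) (simp_all add: add.assoc)

lemma sum_lessThan_mult_split:
  fixes f :: "nat \<Rightarrow> 'a :: comm_monoid_add"
  shows "(\<Sum>j<c * p. f j) = (\<Sum>s<c. \<Sum>t<p. f (s * p + t))"
proof (induction c)
  case (Suc c)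
  have "Suc c * p = c * p + p"
    by simp
  then show ?case
    using Suc.IH sum_lessThan_add_split[of f "c * p" p] by (simp add: add.commute[of p])
qed simp

lemma block_index_lt:
  fixes s t c p :: nat
  assumes "s < c" "t < p"
  shows "s * p + t < c * p"
proof -
  have "s * p + t < Suc s * p"
    using assms(2) by simp
  also have "\<dots> \<le> c * p"
    using assms(1) by (intro mult_le_mono1) simp
  finally show ?thesis .
qed

lemma block_index_cases:
  fixes l n c p :: nat
  assumes "l < n + c * p"
  obtains "l < n"
  | s t where "s < c" "t < p" "l = n + (s * p + t)"
proof (cases "l < n")
  case False
  then have "l - n < c * p"
    using assms by linarith
  moreover from this have "p > 0"
    by (cases p) auto
  ultimately have "(l - n) div p < c" "(l - n) mod p < p"
    by (simp_all add: less_mult_imp_div_less)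
  then show ?thesis
    using False that(2) by (metis add_diff_inverse_nat div_mult_mod_eq)
qed

section \<open>Full column rank\<close>

lemma (in vec_space) rank_le_card_cols:
  assumes "A \<in> carrier_mat n nc"
  shows "rank A \<le> card (set (cols A))"
proof -
  obtain S where S: "maximal S (\<lambda>T. T \<subseteq> set (cols A) \<and> lin_indpt T)"
    using maximal_exists[of "\<lambda>T. T \<subseteq> set (cols A) \<and> lin_indpt T" "card (set (cols A))" "{}"]
    by (meson List.finite_set card_mono empty_iff empty_subsetI finite_lin_indpt2 rev_finite_subset)
  then have "card S \<le> card (set (cols A))"
    by (simp add: card_mono maximal_def)
  then show ?thesis
    using rank_card_indpt[OF assms S] by simp
qed

lemma (in vec_space) rank_less_if_not_distinct_cols:
  assumes "A \<in> carrier_mat n nc" "\<not> distinct (cols A)"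
  shows "rank A < nc"
proof -
  have "card (set (cols A)) < length (cols A)"
    using assms(2) card_distinct card_length le_neq_implies_less by blast
  then show ?thesis
    using rank_le_card_cols[OF assms(1)] assms(1) by simp
qed

lemma (in vec_space) distinct_cols_if_trivial_kernel:
  fixes A :: "'a mat"
  assumes A: "A \<in> carrier_mat n nc"
    and kernel: "\<forall>v\<in>carrier_vec nc. A *\<^sub>v v = 0\<^sub>v n \<longrightarrow> v = 0\<^sub>v nc"
  shows "distinct (cols A)"
proof (rule ccontr)
  assume "\<not> distinct (cols A)"
  then obtain i j where ij: "i < nc" "j < nc" "i \<noteq> j" "col A i = col A j"
    using A by (auto simp: distinct_conv_nth)
  define v :: "'a vec" where "v = unit_vec nc i - unit_vec nc j"
  have "A *\<^sub>v v = 0\<^sub>v n"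
    using A ij by (simp add: v_def mult_minus_distrib_mat_vec mult_mat_vec_unit_vec)
  then have "v = 0\<^sub>v nc"
    using kernel by (simp add: v_def)
  moreover have "v $ i = 1"
    using ij by (simp add: v_def)
  ultimately show False
    using ij(1) by simp
qed

lemma (in vec_space) rank_eq_dim_col_iff:
  assumes A: "A \<in> carrier_mat n nc"
  shows "rank A = nc \<longleftrightarrow> (\<forall>v\<in>carrier_vec nc. A *\<^sub>v v = 0\<^sub>v n \<longrightarrow> v = 0\<^sub>v nc)"
proof
  assume rank: "rank A = nc"
  then have distinct: "distinct (cols A)"
    using rank_less_if_not_distinct_cols[OF A] by auto
  then have "lin_indpt (set (cols A))"
    using full_rank_lin_indpt[OF A rank] by simp
  then show "\<forall>v\<in>carrier_vec nc. A *\<^sub>v v = 0\<^sub>v n \<longrightarrow> v = 0\<^sub>v nc"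
    using lin_depI[OF A _ _ _ distinct] by blast
next
  assume kernel: "\<forall>v\<in>carrier_vec nc. A *\<^sub>v v = 0\<^sub>v n \<longrightarrow> v = 0\<^sub>v nc"
  have distinct: "distinct (cols A)"
    by (rule distinct_cols_if_trivial_kernel[OF A kernel])
  have "lin_indpt (set (cols A))"
    using lin_depE[OF A _ distinct] kernel by metis
  then show "rank A = nc"
    using lin_indpt_full_rank[OF A distinct] by simp
qed

definition leading_cols :: "nat \<Rightarrow> 'a mat \<Rightarrow> 'a mat" where
  "leading_cols nc A = mat (dim_row A) nc (\<lambda>(i,j). A $$ (i,j))"

lemma leading_cols_carrier: "leading_cols nc A \<in> carrier_mat (dim_row A) nc"
  by (simp add: leading_cols_def)

lemma (in vec_space) rank_leading_cols:
  fixes A :: "'a mat"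
  assumes A: "A \<in> carrier_mat n (nc + d)"
    and zero: "\<And>i j. i < n \<Longrightarrow> nc \<le> j \<Longrightarrow> j < nc + d \<Longrightarrow> A $$ (i,j) = 0"
  shows "rank (leading_cols nc A) = rank A"
proof -
  let ?M = "leading_cols nc A"
  have col_M: "col ?M j = col A j" if "j < nc" for j
    using that A by (intro eq_vecI) (auto simp: leading_cols_def)
  have M_cols: "set (cols ?M) = col A ` {0..<nc}"
    using col_M by (auto simp: cols_def leading_cols_def)
  have "col A j = 0\<^sub>v n" if "nc \<le> j" "j < nc + d" for j
    using that A zero by (intro eq_vecI) auto
  then have col_A: "col A j \<in> insert (0\<^sub>v n) (set (cols ?M))" if "j < nc + d" for j
    using that unfolding M_cols by (cases "j < nc") auto
  have A_in_M: "set (cols A) \<subseteq> insert (0\<^sub>v n) (set (cols ?M))"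
  proof
    fix v
    assume "v \<in> set (cols A)"
    then obtain j where "j < nc + d" "v = col A j"
      using A by (auto simp: cols_def)
    then show "v \<in> insert (0\<^sub>v n) (set (cols ?M))"
      using col_A by simp
  qed
  have M_in_A: "set (cols ?M) \<subseteq> set (cols A)"
    using A unfolding M_cols by (auto simp: cols_def)
  have M_carrier: "set (cols ?M) \<subseteq> carrier_vec n"
    using A cols_dim leading_cols_carrier[of nc A] by (metis carrier_matD(1))
  have M_span: "submodule class_ring (span (set (cols ?M))) V"
    using span_is_submodule[OF M_carrier] .
  have "0\<^sub>v n \<in> span (set (cols ?M))"
    using submodule.zero_closed[OF M_span] by simp
  then have "insert (0\<^sub>v n) (set (cols ?M)) \<subseteq> span (set (cols ?M))"
    using in_own_span[OF M_carrier] by blast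
  with A_in_M have "set (cols A) \<subseteq> span (set (cols ?M))"
    by (rule order_trans)
  then have "span (set (cols A)) \<subseteq> span (set (cols ?M))"
    using M_span by (rule span_is_subset)
  moreover have "span (set (cols ?M)) \<subseteq> span (set (cols A))"
    using M_in_A by (rule span_is_monotone)
  ultimately show ?thesis
    by (simp add: rank_def)
qed

section \<open>The transition matrices G_k\<close>

lemma length_Glist: "length (Glist \<alpha> A k) = Suc k"
  by (induction k) (auto simp: Let_def)

lemma Glist_nth: "j \<le> k \<Longrightarrow> Glist \<alpha> A k ! j = Gmat \<alpha> A j"
proof (induction k)
  case (Suc k)
  then show ?case
    by (cases "j = Suc k") (auto simp: Gmat_def Let_def nth_append length_Glist)
qed (simp add: Gmat_def)

lemma Gmat_0: "Gmat \<alpha> A 0 = 1\<^sub>m (dim_row A)"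
  by (simp add: Gmat_def)

lemma Gmat_Suc_foldr:
  "Gmat \<alpha> A (Suc k) = foldr (\<lambda>j acc. Acoef \<alpha> A j * Gmat \<alpha> A (k - j) + acc) [0..<Suc k]
     (0\<^sub>m (dim_row A) (dim_row A))"
proof -
  have "Gmat \<alpha> A (Suc k) = foldr (\<lambda>j acc. Acoef \<alpha> A j * Glist \<alpha> A k ! (k - j) + acc) [0..<Suc k]
     (0\<^sub>m (dim_row A) (dim_row A))"
    by (simp add: Gmat_def Let_def nth_append length_Glist)
  then show ?thesis
    by (simp add: Glist_nth cong: foldr_cong)
qed

lemma Acoef_carrier:
  assumes "\<alpha> \<in> carrier_vec n" "A \<in> carrier_mat n n"
  shows "Acoef \<alpha> A j \<in> carrier_mat n n"
  using assms by (auto simp: Acoef_def Dmat_def)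

lemma Gmat_carrier:
  assumes "\<alpha> \<in> carrier_vec n" "A \<in> carrier_mat n n"
  shows "Gmat \<alpha> A k \<in> carrier_mat n n"
proof (induction k rule: less_induct)
  case (less k)
  show ?case
  proof (cases k)
    case 0
    then show ?thesis using assms by (simp add: Gmat_0)
  next
    case (Suc q)
    have "Acoef \<alpha> A j * Gmat \<alpha> A (q - j) \<in> carrier_mat n n" for j
      using mult_carrier_mat[OF Acoef_carrier[OF assms] less[of "q - j"]] Suc by simp
    then show ?thesis
      using assms unfolding Suc Gmat_Suc_foldr by (subst foldr_add_mat) auto
  qed
qed

lemma Gmat_Suc:
  assumes "\<alpha> \<in> carrier_vec n" "A \<in> carrier_mat n n"
  shows "Gmat \<alpha> A (Suc k) = mat n n (\<lambda>(i,l). \<Sum>j\<le>k. (Acoef \<alpha> A j * Gmat \<alpha> A (k - j)) $$ (i,l))"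
proof -
  have "Acoef \<alpha> A j * Gmat \<alpha> A (k - j) \<in> carrier_mat n n" for j
    using Acoef_carrier[OF assms] Gmat_carrier[OF assms] by (rule mult_carrier_mat)
  then show ?thesis
    using assms unfolding Gmat_Suc_foldr
    by (simp del: upt_Suc
        add: foldr_add_mat interv_sum_list_conv_sum_set_nat atLeast0LessThan lessThan_Suc_atMost)
qed

lemma Gmat_Suc_index:
  assumes "\<alpha> \<in> carrier_vec n" "A \<in> carrier_mat n n" "i < n" "l < n"
  shows "Gmat \<alpha> A (Suc k) $$ (i,l)
    = (\<Sum>j\<le>k. \<Sum>h<n. Acoef \<alpha> A j $$ (i,h) * Gmat \<alpha> A (k - j) $$ (h,l))"
  using assms
  by (simp add: Gmat_Suc index_mult_mat_sum[OF Acoef_carrier[OF assms(1,2)] Gmat_carrier[OF assms(1,2)]])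

(* The memory term sum_{j<=k} A_j x[k-j]; solutions are exactly the sequences with
   x[k+1] = Acoef_conv x k + B u[k] (frac_diff_Suc_eq_iff). *)
definition Acoef_conv :: "real vec \<Rightarrow> real mat \<Rightarrow> (nat \<Rightarrow> real vec) \<Rightarrow> nat \<Rightarrow> real vec"
where
  "Acoef_conv \<alpha> A x k =
     vec (dim_row A) (\<lambda>i. \<Sum>j\<le>k. \<Sum>h<dim_row A. Acoef \<alpha> A j $$ (i,h) * x (k - j) $ h)"

lemma Acoef_conv_cong:
  assumes "\<And>q. q \<le> k \<Longrightarrow> x q = y q"
  shows "Acoef_conv \<alpha> A x k = Acoef_conv \<alpha> A y k"
  unfolding Acoef_conv_def using assms by (intro eq_vecI) auto

lemma Acoef_conv_add:
  assumes "\<And>q. x q \<in> carrier_vec (dim_row A)" "\<And>q. y q \<in> carrier_vec (dim_row A)"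
  shows "Acoef_conv \<alpha> A (\<lambda>q. x q + y q) k = Acoef_conv \<alpha> A x k + Acoef_conv \<alpha> A y k"
proof -
  have "(x q + y q) $ h = x q $ h + y q $ h" if "h < dim_row A" for q h
    using assms[of q] that by auto
  then show ?thesis
    by (intro eq_vecI) (auto simp: Acoef_conv_def distrib_left sum.distrib)
qed

lemma Acoef_index:
  assumes "\<alpha> \<in> carrier_vec n" "A \<in> carrier_mat n n" "i < n" "h < n"
  shows "Acoef \<alpha> A j $$ (i,h)
    = (if j = 0 then A $$ (i,h) else 0) - (if i = h then psi (\<alpha> $ i) (Suc j) else 0)"
  using assms by (auto simp: Acoef_def Dmat_def)

lemma Acoef_conv_index:
  assumes "\<alpha> \<in> carrier_vec n" "A \<in> carrier_mat n n" "x k \<in> carrier_vec n" "i < n"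
  shows "Acoef_conv \<alpha> A x k $ i = (A *\<^sub>v x k) $ i - (\<Sum>j\<le>k. psi (\<alpha> $ i) (Suc j) * x (k - j) $ i)"
proof -
  have "(\<Sum>h<n. Acoef \<alpha> A j $$ (i,h) * x (k - j) $ h)
      = (if j = 0 then (A *\<^sub>v x k) $ i else 0) - psi (\<alpha> $ i) (Suc j) * x (k - j) $ i" for j
  proof -
    have "(\<Sum>h<n. Acoef \<alpha> A j $$ (i,h) * x (k - j) $ h)
        = (\<Sum>h<n. (if j = 0 then A $$ (i,h) else 0) * x (k - j) $ h)
          - (\<Sum>h<n. (if i = h then psi (\<alpha> $ i) (Suc j) else 0) * x (k - j) $ h)"
      using assms by (simp add: Acoef_index left_diff_distrib sum_subtractf)
    then show ?thesis
      using assms by (simp del: index_mult_mat_vec add: sum_delta_mult index_mult_mat_vec_sum)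
  qed
  then show ?thesis
    using assms by (simp add: Acoef_conv_def sum_subtractf)
qed

lemma psi_0 [simp]: "psi a 0 = 1"
  by (simp add: psi_def)

lemma frac_diff_Suc_index:
  assumes "\<alpha> \<in> carrier_vec n" "i < n"
  shows "frac_diff \<alpha> x (Suc k) $ i = x (Suc k) $ i + (\<Sum>j\<le>k. psi (\<alpha> $ i) (Suc j) * x (k - j) $ i)"
  using assms unfolding frac_diff_def by (simp del: sum.atMost_Suc add: sum.atMost_Suc_shift)

lemma frac_diff_Suc_eq_iff:
  assumes "\<alpha> \<in> carrier_vec n" "A \<in> carrier_mat n n" "B \<in> carrier_mat n p"
    and "x k \<in> carrier_vec n" "x (Suc k) \<in> carrier_vec n" "u k \<in> carrier_vec p"
  shows "frac_diff \<alpha> x (Suc k) = A *\<^sub>v x k + B *\<^sub>v u k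
    \<longleftrightarrow> x (Suc k) = Acoef_conv \<alpha> A x k + B *\<^sub>v u k"
proof -
  have "frac_diff \<alpha> x (Suc k) $ i = (A *\<^sub>v x k + B *\<^sub>v u k) $ i
    \<longleftrightarrow> x (Suc k) $ i = (Acoef_conv \<alpha> A x k + B *\<^sub>v u k) $ i" if "i < n" for i
    using assms that by (auto simp del: index_mult_mat_vec simp: frac_diff_Suc_index Acoef_conv_index)
  then show ?thesis
    using assms by (auto simp: vec_eq_iff frac_diff_def Acoef_conv_def)
qed

lemma is_solution_iff:
  assumes "\<alpha> \<in> carrier_vec n" "A \<in> carrier_mat n n" "B \<in> carrier_mat n p"
  shows "is_solution \<alpha> A B x u \<longleftrightarrow> (\<forall>k. x k \<in> carrier_vec n \<and> u k \<in> carrier_vec p)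
    \<and> (\<forall>k. x (Suc k) = Acoef_conv \<alpha> A x k + B *\<^sub>v u k)"
  using frac_diff_Suc_eq_iff[OF assms] assms unfolding is_solution_def by auto

lemma zero_is_solution:
  assumes "\<alpha> \<in> carrier_vec n" "A \<in> carrier_mat n n" "B \<in> carrier_mat n p"
  shows "is_solution \<alpha> A B (\<lambda>k. 0\<^sub>v n) (\<lambda>k. 0\<^sub>v p)"
  using assms by (auto simp: is_solution_iff[OF assms] Acoef_conv_def)

lemma Gmat_Suc_mult_vec:
  assumes "\<alpha> \<in> carrier_vec n" "A \<in> carrier_mat n n" "v \<in> carrier_vec n"
  shows "Gmat \<alpha> A (Suc k) *\<^sub>v v = Acoef_conv \<alpha> A (\<lambda>q. Gmat \<alpha> A q *\<^sub>v v) k"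
proof (rule eq_vecI)
  show "dim_vec (Gmat \<alpha> A (Suc k) *\<^sub>v v) = dim_vec (Acoef_conv \<alpha> A (\<lambda>q. Gmat \<alpha> A q *\<^sub>v v) k)"
    using carrier_matD(1)[OF Gmat_carrier[OF assms(1,2)]] assms by (simp add: Acoef_conv_def)
  fix i
  assume "i < dim_vec (Acoef_conv \<alpha> A (\<lambda>q. Gmat \<alpha> A q *\<^sub>v v) k)"
  then have i: "i < n"
    using assms by (simp add: Acoef_conv_def)
  let ?a = "\<lambda>j h. Acoef \<alpha> A j $$ (i,h)"
  let ?G = "\<lambda>q h l. Gmat \<alpha> A q $$ (h,l)"
  have "(Gmat \<alpha> A (Suc k) *\<^sub>v v) $ i = (\<Sum>l<n. ?G (Suc k) i l * v $ l)"
    by (rule index_mult_mat_vec_sum[OF Gmat_carrier[OF assms(1,2)] assms(3) i])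
  also have "\<dots> = (\<Sum>l<n. (\<Sum>j\<le>k. \<Sum>h<n. ?a j h * ?G (k - j) h l) * v $ l)"
    by (intro sum.cong refl) (simp add: Gmat_Suc_index[OF assms(1,2) i])
  also have "\<dots> = (\<Sum>l<n. \<Sum>j\<le>k. \<Sum>h<n. ?a j h * (?G (k - j) h l * v $ l))"
    by (simp add: sum_distrib_right mult.assoc)
  also have "\<dots> = (\<Sum>j\<le>k. \<Sum>l<n. \<Sum>h<n. ?a j h * (?G (k - j) h l * v $ l))"
    by (rule sum.swap)
  also have "\<dots> = (\<Sum>j\<le>k. \<Sum>h<n. ?a j h * (\<Sum>l<n. ?G (k - j) h l * v $ l))"
    unfolding sum_distrib_left by (rule sum.cong[OF refl], rule sum.swap)
  also have "\<dots> = (\<Sum>j\<le>k. \<Sum>h<n. ?a j h * (Gmat \<alpha> A (k - j) *\<^sub>v v) $ h)"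
    by (intro sum.cong refl arg_cong2[where f="(*)"])
      (simp add: index_mult_mat_vec_sum[OF Gmat_carrier[OF assms(1,2)] assms(3)])
  also have "\<dots> = Acoef_conv \<alpha> A (\<lambda>q. Gmat \<alpha> A q *\<^sub>v v) k $ i"
    using i assms by (simp add: Acoef_conv_def)
  finally show "(Gmat \<alpha> A (Suc k) *\<^sub>v v) $ i = Acoef_conv \<alpha> A (\<lambda>q. Gmat \<alpha> A q *\<^sub>v v) k $ i" .
qed

definition forced_response ::
  "real vec \<Rightarrow> real mat \<Rightarrow> real mat \<Rightarrow> (nat \<Rightarrow> real vec) \<Rightarrow> nat \<Rightarrow> real vec"
where
  "forced_response \<alpha> A B u k =
     vec (dim_row A) (\<lambda>i. \<Sum>s<k. (Gmat \<alpha> A (k - 1 - s) *\<^sub>v (B *\<^sub>v u s)) $ i)"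

definition trajectory ::
  "real vec \<Rightarrow> real mat \<Rightarrow> real mat \<Rightarrow> real vec \<Rightarrow> (nat \<Rightarrow> real vec) \<Rightarrow> nat \<Rightarrow> real vec"
where
  "trajectory \<alpha> A B x0 u k = Gmat \<alpha> A k *\<^sub>v x0 + forced_response \<alpha> A B u k"

lemma forced_response_Suc:
  assumes "\<alpha> \<in> carrier_vec n" "A \<in> carrier_mat n n" "B \<in> carrier_mat n p"
    and "\<And>s. u s \<in> carrier_vec p"
  shows "forced_response \<alpha> A B u (Suc k)
    = Acoef_conv \<alpha> A (forced_response \<alpha> A B u) k + B *\<^sub>v u k"
proof (rule eq_vecI)
  show "dim_vec (forced_response \<alpha> A B u (Suc k))
    = dim_vec (Acoef_conv \<alpha> A (forced_response \<alpha> A B u) k + B *\<^sub>v u k)"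
    using assms by (simp add: forced_response_def)
  fix i
  assume "i < dim_vec (Acoef_conv \<alpha> A (forced_response \<alpha> A B u) k + B *\<^sub>v u k)"
  then have i: "i < n"
    using assms by simp
  let ?a = "\<lambda>j h. Acoef \<alpha> A j $$ (i,h)"
  let ?F = "\<lambda>s q. Gmat \<alpha> A q *\<^sub>v (B *\<^sub>v u s)"
  have Bu: "B *\<^sub>v u s \<in> carrier_vec n" for s
    using assms by simp
  have "forced_response \<alpha> A B u (Suc k) $ i = (\<Sum>s<k. ?F s (Suc (k - 1 - s)) $ i) + (B *\<^sub>v u k) $ i"
    using i assms Bu by (simp add: forced_response_def Gmat_0 Suc_diff_Suc)
  also have "\<dots> = (\<Sum>s<k. \<Sum>j\<le>k - 1 - s. \<Sum>h<n. ?a j h * ?F s (k - 1 - s - j) $ h) + (B *\<^sub>v u k) $ i"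
    using i assms by (simp add: Gmat_Suc_mult_vec[OF assms(1,2) Bu] Acoef_conv_def)
  also have "\<dots> = (\<Sum>j\<le>k. \<Sum>s<k - j. \<Sum>h<n. ?a j h * ?F s (k - j - 1 - s) $ h) + (B *\<^sub>v u k) $ i"
    by (simp add: sum_triangle_swap add.commute)
  also have "\<dots> = (\<Sum>j\<le>k. \<Sum>h<n. ?a j h * (\<Sum>s<k - j. ?F s (k - j - 1 - s) $ h)) + (B *\<^sub>v u k) $ i"
    unfolding sum_distrib_left by (simp only: sum.swap[of _ "{..<n}"])
  also have "\<dots> = (\<Sum>j\<le>k. \<Sum>h<n. ?a j h * forced_response \<alpha> A B u (k - j) $ h) + (B *\<^sub>v u k) $ i"
    using assms by (intro arg_cong2[where f="(+)"] sum.cong refl arg_cong2[where f="(*)"])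
      (simp add: forced_response_def)
  also have "\<dots> = (Acoef_conv \<alpha> A (forced_response \<alpha> A B u) k + B *\<^sub>v u k) $ i"
    using i assms by (simp del: index_mult_mat_vec add: Acoef_conv_def)
  finally show "forced_response \<alpha> A B u (Suc k) $ i
    = (Acoef_conv \<alpha> A (forced_response \<alpha> A B u) k + B *\<^sub>v u k) $ i" .
qed

lemma trajectory_carrier:
  assumes "\<alpha> \<in> carrier_vec n" "A \<in> carrier_mat n n" "x0 \<in> carrier_vec n"
  shows "trajectory \<alpha> A B x0 u k \<in> carrier_vec n"
  unfolding trajectory_def using assms
  by (intro add_carrier_vec mult_mat_vec_carrier[OF Gmat_carrier]) (auto simp: forced_response_def)

lemma trajectory_0:
  assumes "A \<in> carrier_mat n n" "x0 \<in> carrier_vec n"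
  shows "trajectory \<alpha> A B x0 u 0 = x0"
  using assms by (auto simp: trajectory_def forced_response_def Gmat_0)

lemma trajectory_Suc:
  assumes "\<alpha> \<in> carrier_vec n" "A \<in> carrier_mat n n" "B \<in> carrier_mat n p"
    and "x0 \<in> carrier_vec n" "\<And>s. u s \<in> carrier_vec p"
  shows "trajectory \<alpha> A B x0 u (Suc k)
    = Acoef_conv \<alpha> A (trajectory \<alpha> A B x0 u) k + B *\<^sub>v u k"
proof -
  let ?free = "\<lambda>q. Gmat \<alpha> A q *\<^sub>v x0" and ?forced = "forced_response \<alpha> A B u"
  have free: "?free q \<in> carrier_vec (dim_row A)" for q
    using mult_mat_vec_carrier[OF Gmat_carrier[OF assms(1,2)] assms(4)] assms(2) by simp
  have forced: "?forced q \<in> carrier_vec (dim_row A)" for q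
    by (simp add: forced_response_def)
  have "trajectory \<alpha> A B x0 u (Suc k)
      = Acoef_conv \<alpha> A ?free k + (Acoef_conv \<alpha> A ?forced k + B *\<^sub>v u k)"
    by (simp only: trajectory_def Gmat_Suc_mult_vec[OF assms(1,2,4)] forced_response_Suc[OF assms(1-3,5)])
  also have "\<dots> = (Acoef_conv \<alpha> A ?free k + Acoef_conv \<alpha> A ?forced k) + B *\<^sub>v u k"
    using assms by (intro assoc_add_vec[symmetric]) (auto simp: Acoef_conv_def)
  also have "Acoef_conv \<alpha> A ?free k + Acoef_conv \<alpha> A ?forced k
      = Acoef_conv \<alpha> A (trajectory \<alpha> A B x0 u) k"
    unfolding trajectory_def by (rule Acoef_conv_add[OF free forced, symmetric])
  finally show ?thesis .
qed

lemma is_solution_trajectory: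
  assumes "\<alpha> \<in> carrier_vec n" "A \<in> carrier_mat n n" "B \<in> carrier_mat n p"
    and "x0 \<in> carrier_vec n" "\<And>s. u s \<in> carrier_vec p"
  shows "is_solution \<alpha> A B (trajectory \<alpha> A B x0 u) u"
  using assms trajectory_carrier[OF assms(1,2,4)] trajectory_Suc[OF assms]
  by (simp add: is_solution_iff[OF assms(1-3)])

lemma solution_eq_trajectory:
  assumes "\<alpha> \<in> carrier_vec n" "A \<in> carrier_mat n n" "B \<in> carrier_mat n p"
    and "is_solution \<alpha> A B x u"
  shows "x k = trajectory \<alpha> A B (x 0) u k"
proof (induction k rule: less_induct)
  case (less k)
  have sol: "\<And>k. x k \<in> carrier_vec n \<and> u k \<in> carrier_vec p"
    "\<And>k. x (Suc k) = Acoef_conv \<alpha> A x k + B *\<^sub>v u k"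
    using assms(4) by (auto simp: is_solution_iff[OF assms(1-3)])
  show ?case
  proof (cases k)
    case 0
    then show ?thesis
      using sol(1) assms(2) by (simp add: trajectory_0)
  next
    case (Suc q)
    have "Acoef_conv \<alpha> A x q = Acoef_conv \<alpha> A (trajectory \<alpha> A B (x 0) u) q"
    proof (rule Acoef_conv_cong)
      show "x q' = trajectory \<alpha> A B (x 0) u q'" if "q' \<le> q" for q'
        using that Suc by (intro less.IH) simp
    qed
    then show ?thesis
      using Suc sol trajectory_Suc[OF assms(1-3), of "x 0" u q] by simp
  qed
qed

section \<open>The stacked system\<close>

(* The unknown [x[0]; u[0]; ...; u[K-2]]: u[K-1] is left out because the last block column
   of Xi is zero. *)
definition initial_input_vec :: "nat \<Rightarrow> nat \<Rightarrow> nat \<Rightarrow> 'a vec \<Rightarrow> (nat \<Rightarrow> 'a vec) \<Rightarrow> 'a vec"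
where
  "initial_input_vec n p K x0 u = vec (n + (K - 1) * p)
     (\<lambda>l. if l < n then x0 $ l else u ((l - n) div p) $ ((l - n) mod p))"

lemma dim_initial_input_vec [simp]: "dim_vec (initial_input_vec n p K x0 u) = n + (K - 1) * p"
  by (simp add: initial_input_vec_def)

lemma initial_input_vec_carrier: "initial_input_vec n p K x0 u \<in> carrier_vec (n + (K - 1) * p)"
  by (simp add: initial_input_vec_def)

lemma initial_input_vec_index_initial:
  "l < n \<Longrightarrow> initial_input_vec n p K x0 u $ l = x0 $ l"
  by (simp add: initial_input_vec_def)

lemma initial_input_vec_index_input:
  assumes "s < K - 1" "t < p"
  shows "initial_input_vec n p K x0 u $ (n + (s * p + t)) = u s $ t"
  using assms block_index_lt[OF assms] by (simp add: initial_input_vec_def)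

lemma initial_input_vec_eq_iff:
  assumes "x0 \<in> carrier_vec n" "x0' \<in> carrier_vec n"
    and "\<And>s. u s \<in> carrier_vec p" "\<And>s. u' s \<in> carrier_vec p"
  shows "initial_input_vec n p K x0 u = initial_input_vec n p K x0' u'
    \<longleftrightarrow> x0 = x0' \<and> (\<forall>s<K - 1. u s = u' s)"
proof
  assume eq: "initial_input_vec n p K x0 u = initial_input_vec n p K x0' u'"
  have "x0 = x0'"
  proof (rule eq_vecI)
    fix l
    assume "l < dim_vec x0'"
    then show "x0 $ l = x0' $ l"
      using eq assms(2) initial_input_vec_index_initial[of l n p K] by (metis carrier_vecD)
  qed (simp add: carrier_vecD[OF assms(1)] carrier_vecD[OF assms(2)])
  moreover have "u s = u' s" if "s < K - 1" for s
  proof (rule eq_vecI)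
    fix t
    assume "t < dim_vec (u' s)"
    then show "u s $ t = u' s $ t"
      using eq assms(4) that initial_input_vec_index_input[of s K t p n] by (metis carrier_vecD)
  qed (simp add: carrier_vecD[OF assms(3)] carrier_vecD[OF assms(4)])
  ultimately show "x0 = x0' \<and> (\<forall>s<K - 1. u s = u' s)"
    by blast
next
  assume eq: "x0 = x0' \<and> (\<forall>s<K - 1. u s = u' s)"
  show "initial_input_vec n p K x0 u = initial_input_vec n p K x0' u'"
  proof (rule eq_vecI)
    fix l
    assume "l < dim_vec (initial_input_vec n p K x0' u')"
    then have "l < n + (K - 1) * p"
      by (simp add: initial_input_vec_def)
    then show "initial_input_vec n p K x0 u $ l = initial_input_vec n p K x0' u' $ l"
      by (cases rule: block_index_cases)
        (use eq in \<open>simp_all add: initial_input_vec_index_initial initial_input_vec_index_input\<close>)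
  qed (simp add: initial_input_vec_def)
qed

lemma initial_input_vec_surj:
  assumes "w \<in> carrier_vec (n + (K - 1) * p)"
  obtains x0 u where "x0 \<in> carrier_vec n" "\<And>s. u s \<in> carrier_vec p"
    "w = initial_input_vec n p K x0 u"
proof
  let ?x0 = "vec n (\<lambda>l. w $ l)" and ?u = "\<lambda>s. vec p (\<lambda>t. w $ (n + (s * p + t)))"
  show "w = initial_input_vec n p K ?x0 ?u"
  proof (rule eq_vecI)
    fix l
    assume "l < dim_vec (initial_input_vec n p K ?x0 ?u)"
    then have "l < n + (K - 1) * p"
      by (simp add: initial_input_vec_def)
    then show "w $ l = initial_input_vec n p K ?x0 ?u $ l"
      by (cases rule: block_index_cases)
        (simp_all add: initial_input_vec_index_initial initial_input_vec_index_input)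
  qed (use assms in \<open>simp add: initial_input_vec_def\<close>)
qed auto

lemma initial_input_vec_zero:
  "initial_input_vec n p K (0\<^sub>v n) (\<lambda>s. 0\<^sub>v p) = 0\<^sub>v (n + (K - 1) * p)"
proof (rule eq_vecI)
  fix l
  assume "l < dim_vec (0\<^sub>v (n + (K - 1) * p))"
  then have "l < n + (K - 1) * p"
    by simp
  then show "initial_input_vec n p K (0\<^sub>v n) (\<lambda>s. 0\<^sub>v p) $ l = 0\<^sub>v (n + (K - 1) * p) $ l"
    using \<open>l < n + (K - 1) * p\<close>
    by (cases rule: block_index_cases)
      (simp_all add: initial_input_vec_index_initial initial_input_vec_index_input)
qed (simp add: initial_input_vec_def)

definition output_vec :: "'a :: semiring_0 mat \<Rightarrow> (nat \<Rightarrow> 'a vec) \<Rightarrow> nat \<Rightarrow> 'a vec" where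
  "output_vec C x K = vec (K * dim_row C) (\<lambda>i. (C *\<^sub>v x (i div dim_row C)) $ (i mod dim_row C))"

lemma output_vec_carrier: "output_vec C x K \<in> carrier_vec (K * dim_row C)"
  by (simp add: output_vec_def)

lemma output_vec_eq_iff:
  "output_vec C x K = output_vec C x' K \<longleftrightarrow> (\<forall>k<K. C *\<^sub>v x k = C *\<^sub>v x' k)"
proof
  assume eq: "output_vec C x K = output_vec C x' K"
  show "\<forall>k<K. C *\<^sub>v x k = C *\<^sub>v x' k"
  proof (intro allI impI eq_vecI)
    fix k q
    assume "k < K" "q < dim_vec (C *\<^sub>v x' k)"
    then have "k * dim_row C + q < K * dim_row C"
      using block_index_lt by simp
    then show "(C *\<^sub>v x k) $ q = (C *\<^sub>v x' k) $ q"
      using arg_cong[OF eq, of "\<lambda>w. w $ (k * dim_row C + q)"] \<open>q < dim_vec (C *\<^sub>v x' k)\<close>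
      by (simp add: output_vec_def)
  qed simp
next
  assume "\<forall>k<K. C *\<^sub>v x k = C *\<^sub>v x' k"
  moreover have "i div dim_row C < K" if "i < K * dim_row C" for i
    using that by (simp add: less_mult_imp_div_less)
  ultimately show "output_vec C x K = output_vec C x' K"
    by (intro eq_vecI) (auto simp: output_vec_def)
qed

lemma output_vec_zero:
  assumes "C \<in> carrier_mat m n"
  shows "output_vec C (\<lambda>k. 0\<^sub>v n) K = 0\<^sub>v (K * m)"
proof -
  have "C *\<^sub>v 0\<^sub>v n = 0\<^sub>v m"
    using assms by auto
  moreover have "i mod m < m" if "i < K * m" for i
    using that by (cases m) auto
  ultimately show ?thesis
    using assms by (intro eq_vecI) (auto simp: output_vec_def)
qed

lemma ThetaXi_carrier:
  assumes "B \<in> carrier_mat n p" "C \<in> carrier_mat m n"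
  shows "ThetaXi \<alpha> A B C K \<in> carrier_mat (K * m) (n + K * p)"
  using assms by (simp add: ThetaXi_def Theta_def Xi_def Let_def)

lemma ThetaXi_index:
  assumes "B \<in> carrier_mat n p" "C \<in> carrier_mat m n" "i < K * m" "j < n + K * p"
  shows "ThetaXi \<alpha> A B C K $$ (i,j) =
    (if j < n then (C * Gmat \<alpha> A (i div m)) $$ (i mod m, j)
     else if (j - n) div p < i div m
     then (C * Gmat \<alpha> A (i div m - (j - n) div p - 1) * B) $$ (i mod m, (j - n) mod p)
     else 0)"
  using assms by (simp add: ThetaXi_def Theta_def Xi_def Let_def)

lemma ThetaXi_last_block_zero:
  assumes "B \<in> carrier_mat n p" "C \<in> carrier_mat m n" "i < K * m"
    and "n + (K - 1) * p \<le> j" "j < n + K * p"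
  shows "ThetaXi \<alpha> A B C K $$ (i,j) = 0"
proof -
  have "(K - 1) * p div p \<le> (j - n) div p"
    using assms(4) by (intro div_le_mono) simp
  moreover have "p > 0"
    using assms(4,5) by (cases p) auto
  moreover have "i div m < K"
    using assms(3) by (simp add: less_mult_imp_div_less)
  ultimately show ?thesis
    using assms by (simp add: ThetaXi_index)
qed

lemma ThetaXi_Theta_block_sum:
  assumes "\<alpha> \<in> carrier_vec n" "A \<in> carrier_mat n n" "B \<in> carrier_mat n p" "C \<in> carrier_mat m n"
    and "x0 \<in> carrier_vec n" "i < K * m"
  shows "(\<Sum>j<n. ThetaXi \<alpha> A B C K $$ (i,j) * x0 $ j)
    = (C *\<^sub>v (Gmat \<alpha> A (i div m) *\<^sub>v x0)) $ (i mod m)"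
proof -
  let ?CG = "C * Gmat \<alpha> A (i div m)"
  have CG: "?CG \<in> carrier_mat m n"
    using assms(4) Gmat_carrier[OF assms(1,2)] by (rule mult_carrier_mat)
  have q: "i mod m < m"
    using assms(6) by (cases m) auto
  have "(\<Sum>j<n. ThetaXi \<alpha> A B C K $$ (i,j) * x0 $ j) = (\<Sum>j<n. ?CG $$ (i mod m, j) * x0 $ j)"
    using assms(3,4,6) by (intro sum.cong refl) (simp add: ThetaXi_index)
  also have "\<dots> = (?CG *\<^sub>v x0) $ (i mod m)"
    using index_mult_mat_vec_sum[OF CG assms(5) q] by simp
  also have "\<dots> = (C *\<^sub>v (Gmat \<alpha> A (i div m) *\<^sub>v x0)) $ (i mod m)"
    using assoc_mult_mat_vec[OF assms(4) Gmat_carrier[OF assms(1,2)] assms(5)] by simp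
  finally show ?thesis .
qed

lemma ThetaXi_Xi_block_sum:
  assumes "\<alpha> \<in> carrier_vec n" "A \<in> carrier_mat n n" "B \<in> carrier_mat n p" "C \<in> carrier_mat m n"
    and "\<And>s. u s \<in> carrier_vec p" "i < K * m"
  shows "(\<Sum>j<(K - 1) * p. ThetaXi \<alpha> A B C K $$ (i, n + j) * initial_input_vec n p K x0 u $ (n + j))
    = (\<Sum>s<i div m. (C *\<^sub>v (Gmat \<alpha> A (i div m - 1 - s) *\<^sub>v (B *\<^sub>v u s))) $ (i mod m))"
proof -
  let ?r = "i div m" and ?q = "i mod m"
  let ?y = "\<lambda>s. (C *\<^sub>v (Gmat \<alpha> A (?r - 1 - s) *\<^sub>v (B *\<^sub>v u s))) $ ?q"
  have r: "?r < K"
    using assms(6) by (simp add: less_mult_imp_div_less)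
  have q: "?q < m"
    using assms(6) by (cases m) auto
  have block: "(\<Sum>t<p. ThetaXi \<alpha> A B C K $$ (i, n + (s * p + t)) * initial_input_vec n p K x0 u $ (n + (s * p + t)))
      = (if s < ?r then ?y s else 0)" if s: "s < K - 1" for s
  proof -
    have j: "n + (s * p + t) < n + K * p" if "t < p" for t
      using block_index_lt[OF s that] by (simp add: diff_mult_distrib)
    show ?thesis
    proof (cases "s < ?r")
      case True
      let ?CGB = "C * Gmat \<alpha> A (?r - 1 - s) * B"
      have CGB: "?CGB \<in> carrier_mat m p"
        using assms(3,4) Gmat_carrier[OF assms(1,2)] by (intro mult_carrier_mat)
      have "(\<Sum>t<p. ThetaXi \<alpha> A B C K $$ (i, n + (s * p + t)) * initial_input_vec n p K x0 u $ (n + (s * p + t)))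
          = (\<Sum>t<p. ?CGB $$ (?q, t) * u s $ t)"
        using True j assms(3,4,6) s
        by (intro sum.cong refl) (simp add: ThetaXi_index initial_input_vec_index_input)
      also have "\<dots> = (?CGB *\<^sub>v u s) $ ?q"
        using index_mult_mat_vec_sum[OF CGB assms(5) q] by simp
      also have "\<dots> = ?y s"
        using assoc_mult_mat_vec[OF mult_carrier_mat[OF assms(4) Gmat_carrier[OF assms(1,2)]] assms(3,5)]
          assoc_mult_mat_vec[OF assms(4) Gmat_carrier[OF assms(1,2)] mult_mat_vec_carrier[OF assms(3,5)]]
        by simp
      finally show ?thesis
        using True by simp
    next
      case False
      then show ?thesis
        using j assms(3,4,6) by (simp add: ThetaXi_index)
    qed
  qed
  have "(\<Sum>j<(K - 1) * p. ThetaXi \<alpha> A B C K $$ (i, n + j) * initial_input_vec n p K x0 u $ (n + j))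
      = (\<Sum>s<K - 1. if s < ?r then ?y s else 0)"
    unfolding sum_lessThan_mult_split by (rule sum.cong[OF refl]) (simp add: block)
  also have "\<dots> = (\<Sum>s\<in>{..<K - 1} \<inter> {s. s < ?r}. ?y s)"
    by (subst sum.inter_restrict) auto
  also have "{..<K - 1} \<inter> {s. s < ?r} = {..<?r}"
    using r by auto
  finally show ?thesis .
qed

lemma ThetaXi_mult_initial_input:
  assumes "\<alpha> \<in> carrier_vec n" "A \<in> carrier_mat n n" "B \<in> carrier_mat n p" "C \<in> carrier_mat m n"
    and "x0 \<in> carrier_vec n" "\<And>s. u s \<in> carrier_vec p"
  shows "leading_cols (n + (K - 1) * p) (ThetaXi \<alpha> A B C K) *\<^sub>v initial_input_vec n p K x0 u
    = output_vec C (trajectory \<alpha> A B x0 u) K"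
proof (rule eq_vecI)
  let ?N = "n + (K - 1) * p" and ?T = "ThetaXi \<alpha> A B C K" and ?w = "initial_input_vec n p K x0 u"
  have T: "?T \<in> carrier_mat (K * m) (n + K * p)"
    using assms(3,4) by (rule ThetaXi_carrier)
  then have M: "leading_cols ?N ?T \<in> carrier_mat (K * m) ?N"
    using leading_cols_carrier[of ?N ?T] by simp
  then show "dim_vec (leading_cols ?N ?T *\<^sub>v ?w) = dim_vec (output_vec C (trajectory \<alpha> A B x0 u) K)"
    using assms(4) by (simp add: output_vec_def)
  fix i
  assume "i < dim_vec (output_vec C (trajectory \<alpha> A B x0 u) K)"
  then have i: "i < K * m"
    using assms(4) by (simp add: output_vec_def)
  let ?r = "i div m" and ?q = "i mod m"
  have q: "?q < m"
    using i by (cases m) auto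
  have "(leading_cols ?N ?T *\<^sub>v ?w) $ i = (\<Sum>j<?N. ?T $$ (i,j) * ?w $ j)"
    using index_mult_mat_vec_sum[OF M _ i] T i by (simp add: initial_input_vec_def leading_cols_def)
  also have "\<dots> = (\<Sum>j<n. ?T $$ (i,j) * x0 $ j) + (\<Sum>j<(K - 1) * p. ?T $$ (i, n + j) * ?w $ (n + j))"
    by (simp add: sum_lessThan_add_split initial_input_vec_index_initial)
  also have "\<dots> = (C *\<^sub>v (Gmat \<alpha> A ?r *\<^sub>v x0)) $ ?q
      + (\<Sum>s<?r. (C *\<^sub>v (Gmat \<alpha> A (?r - 1 - s) *\<^sub>v (B *\<^sub>v u s))) $ ?q)"
    using ThetaXi_Theta_block_sum[OF assms(1-5) i] ThetaXi_Xi_block_sum[OF assms(1-4,6) i] by simp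
  also have "\<dots> = (C *\<^sub>v trajectory \<alpha> A B x0 u ?r) $ ?q"
  proof -
    have G: "Gmat \<alpha> A k \<in> carrier_mat n n" for k
      using assms(1,2) by (rule Gmat_carrier)
    have "(C *\<^sub>v forced_response \<alpha> A B u ?r) $ ?q
        = (\<Sum>s<?r. (C *\<^sub>v (Gmat \<alpha> A (?r - 1 - s) *\<^sub>v (B *\<^sub>v u s))) $ ?q)"
      unfolding forced_response_def carrier_matD(1)[OF assms(2)]
      by (rule mult_mat_vec_vec_sum[OF assms(4) _ q])
        (simp add: mult_mat_vec_carrier[OF G mult_mat_vec_carrier[OF assms(3,6)]])
    moreover have "C *\<^sub>v trajectory \<alpha> A B x0 u ?r
        = C *\<^sub>v (Gmat \<alpha> A ?r *\<^sub>v x0) + C *\<^sub>v forced_response \<alpha> A B u ?r"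
      unfolding trajectory_def using assms(2) mult_mat_vec_carrier[OF G assms(5)]
      by (intro mult_add_distrib_mat_vec[OF assms(4)]) (auto simp: forced_response_def)
    ultimately show ?thesis
      using assms(4) q by simp
  qed
  also have "\<dots> = output_vec C (trajectory \<alpha> A B x0 u) K $ i"
    using assms(4) i by (simp add: output_vec_def)
  finally show "(leading_cols ?N ?T *\<^sub>v ?w) $ i = output_vec C (trajectory \<alpha> A B x0 u) K $ i" .
qed

lemma ThetaXi_mult_solution:
  assumes "\<alpha> \<in> carrier_vec n" "A \<in> carrier_mat n n" "B \<in> carrier_mat n p" "C \<in> carrier_mat m n"
    and "is_solution \<alpha> A B x u"
  shows "leading_cols (n + (K - 1) * p) (ThetaXi \<alpha> A B C K) *\<^sub>v initial_input_vec n p K (x 0) u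
    = output_vec C x K"
proof -
  have "x 0 \<in> carrier_vec n" "\<And>s. u s \<in> carrier_vec p"
    using assms(5) by (auto simp: is_solution_iff[OF assms(1-3)])
  then have "leading_cols (n + (K - 1) * p) (ThetaXi \<alpha> A B C K) *\<^sub>v initial_input_vec n p K (x 0) u
      = output_vec C (trajectory \<alpha> A B (x 0) u) K"
    by (rule ThetaXi_mult_initial_input[OF assms(1-4)])
  also have "trajectory \<alpha> A B (x 0) u = x"
    by (rule ext, rule solution_eq_trajectory[OF assms(1-3,5), symmetric])
  finally show ?thesis .
qed

section \<open>Observability\<close>

lemma trivial_kernel_if_perfectly_observable:
  assumes "\<alpha> \<in> carrier_vec n" "A \<in> carrier_mat n n" "B \<in> carrier_mat n p" "C \<in> carrier_mat m n"
    and observable: "perfectly_observable \<alpha> A B C K"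
    and w: "w \<in> carrier_vec (n + (K - 1) * p)"
    and kernel: "leading_cols (n + (K - 1) * p) (ThetaXi \<alpha> A B C K) *\<^sub>v w = 0\<^sub>v (K * m)"
  shows "w = 0\<^sub>v (n + (K - 1) * p)"
proof -
  obtain x0 u where x0: "x0 \<in> carrier_vec n" and u: "\<And>s. u s \<in> carrier_vec p"
    and w_eq: "w = initial_input_vec n p K x0 u"
    using initial_input_vec_surj[OF w] by blast
  let ?x = "trajectory \<alpha> A B x0 u"
  have "output_vec C ?x K = output_vec C (\<lambda>k. 0\<^sub>v n) K"
    using kernel ThetaXi_mult_initial_input[OF assms(1-4) x0 u] output_vec_zero[OF assms(4)]
    by (simp add: w_eq)
  then have "?x 0 = 0\<^sub>v n \<and> (\<forall>j. j + 1 < K \<longrightarrow> u j = 0\<^sub>v p)"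
    using observable[unfolded perfectly_observable_def, rule_format, of ?x u "\<lambda>k. 0\<^sub>v n" "\<lambda>k. 0\<^sub>v p"]
      is_solution_trajectory[OF assms(1-3) x0 u] zero_is_solution[OF assms(1-3)]
    by (simp add: output_vec_eq_iff)
  then have "x0 = 0\<^sub>v n" "\<forall>s<K - 1. u s = 0\<^sub>v p"
    using trajectory_0[OF assms(2) x0] by auto
  then have "w = initial_input_vec n p K (0\<^sub>v n) (\<lambda>s. 0\<^sub>v p)"
    unfolding w_eq by (subst initial_input_vec_eq_iff[OF x0 zero_carrier_vec u]) auto
  then show ?thesis
    by (simp add: initial_input_vec_zero)
qed

lemma perfectly_observable_if_trivial_kernel:
  assumes "\<alpha> \<in> carrier_vec n" "A \<in> carrier_mat n n" "B \<in> carrier_mat n p" "C \<in> carrier_mat m n"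
    and kernel: "\<forall>w\<in>carrier_vec (n + (K - 1) * p).
      leading_cols (n + (K - 1) * p) (ThetaXi \<alpha> A B C K) *\<^sub>v w = 0\<^sub>v (K * m) \<longrightarrow> w = 0\<^sub>v (n + (K - 1) * p)"
  shows "perfectly_observable \<alpha> A B C K"
  unfolding perfectly_observable_def
proof (intro allI impI)
  fix x u x' u'
  assume "is_solution \<alpha> A B x u \<and> is_solution \<alpha> A B x' u' \<and> (\<forall>k<K. C *\<^sub>v x k = C *\<^sub>v x' k)"
  then have sol: "is_solution \<alpha> A B x u" and sol': "is_solution \<alpha> A B x' u'"
    and outputs: "output_vec C x K = output_vec C x' K"
    by (auto simp: output_vec_eq_iff)
  let ?M = "leading_cols (n + (K - 1) * p) (ThetaXi \<alpha> A B C K)"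
  let ?w = "initial_input_vec n p K (x 0) u" and ?w' = "initial_input_vec n p K (x' 0) u'"
  have carriers: "x 0 \<in> carrier_vec n" "x' 0 \<in> carrier_vec n" "\<And>s. u s \<in> carrier_vec p" "\<And>s. u' s \<in> carrier_vec p"
    using sol sol' by (auto simp: is_solution_iff[OF assms(1-3)])
  have w: "?w \<in> carrier_vec (n + (K - 1) * p)" "?w' \<in> carrier_vec (n + (K - 1) * p)"
    by (rule initial_input_vec_carrier)+
  have M: "?M \<in> carrier_mat (K * m) (n + (K - 1) * p)"
    using leading_cols_carrier[of _ "ThetaXi \<alpha> A B C K"] carrier_matD(1)[OF ThetaXi_carrier[OF assms(3,4)]]
    by simp
  have "?M *\<^sub>v (?w - ?w') = ?M *\<^sub>v ?w - ?M *\<^sub>v ?w'"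
    using M w by (rule mult_minus_distrib_mat_vec)
  also have "\<dots> = output_vec C x' K - output_vec C x' K"
    using ThetaXi_mult_solution[OF assms(1-4) sol] ThetaXi_mult_solution[OF assms(1-4) sol'] outputs
    by simp
  also have "\<dots> = 0\<^sub>v (K * m)"
    using output_vec_carrier[of C x' K] carrier_matD(1)[OF assms(4)] by simp
  finally have "?M *\<^sub>v (?w - ?w') = 0\<^sub>v (K * m)" .
  moreover have "?w - ?w' \<in> carrier_vec (n + (K - 1) * p)"
    using w by simp
  ultimately have "?w - ?w' = 0\<^sub>v (n + (K - 1) * p)"
    using kernel by blast
  have "?w = ?w'"
  proof (rule eq_vecI)
    fix l
    assume "l < dim_vec ?w'"
    then show "?w $ l = ?w' $ l"
      using arg_cong[OF \<open>?w - ?w' = 0\<^sub>v (n + (K - 1) * p)\<close>, of "\<lambda>v. v $ l"] by simp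
  qed simp
  then have "x 0 = x' 0 \<and> (\<forall>s<K - 1. u s = u' s)"
    using initial_input_vec_eq_iff[where u = u and u' = u' and K = K, OF carriers] by blast
  then show "x 0 = x' 0 \<and> (\<forall>j. j + 1 < K \<longrightarrow> u j = u' j)"
    using less_diff_conv by blast
qed

theorem proposition2:
  fixes n p m K :: nat and \<alpha> :: "real vec" and A B C :: "real mat"
  assumes "\<alpha> \<in> carrier_vec n"
    and "A \<in> carrier_mat n n" and "B \<in> carrier_mat n p" and "C \<in> carrier_mat m n"
    and "p < n" and "K \<ge> 1"
  shows "perfectly_observable \<alpha> A B C K \<longleftrightarrow>
         vec_space.rank (K * m) (ThetaXi \<alpha> A B C K) = n + (K - 1) * p"
proof -
  let ?N = "n + (K - 1) * p" and ?T = "ThetaXi \<alpha> A B C K"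
  have "n + K * p = ?N + p"
    using \<open>K \<ge> 1\<close> by (cases K) auto
  have T: "?T \<in> carrier_mat (K * m) (?N + p)"
    using ThetaXi_carrier[OF assms(3,4), of \<alpha> A K] unfolding \<open>n + K * p = ?N + p\<close> .
  have "vec_space.rank (K * m) ?T = vec_space.rank (K * m) (leading_cols ?N ?T)"
    using vec_space.rank_leading_cols[OF T] ThetaXi_last_block_zero[OF assms(3,4)] \<open>n + K * p = ?N + p\<close>
    by simp
  moreover have "leading_cols ?N ?T \<in> carrier_mat (K * m) ?N"
    using leading_cols_carrier[of ?N ?T] T by simp
  ultimately have "vec_space.rank (K * m) ?T = ?N
      \<longleftrightarrow> (\<forall>w\<in>carrier_vec ?N. leading_cols ?N ?T *\<^sub>v w = 0\<^sub>v (K * m) \<longrightarrow> w = 0\<^sub>v ?N)"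
    using vec_space.rank_eq_dim_col_iff by simp
  then show ?thesis
    using trivial_kernel_if_perfectly_observable[OF assms(1-4)]
      perfectly_observable_if_trivial_kernel[OF assms(1-4)] by blast
qed

end
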